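(* Let $\mathcal{X}\subseteq\mathbb{R}^d$ be nonempty, closed and convex, let $f:\mathbb{R}^d\to\mathbb{R}$ be convex (not necessarily differentiable), and assume $\mathcal{X}_\star:=\operatorname{arg\,min}_{x\in\mathcal{X}}f(x)$ is nonempty. Assume there is $G>0$ with $\|g\|\le G$ for all $x\in\mathcal{X}$ and all $g\in\partial f(x)$. Let $x_\star\in\mathcal{X}_\star$ and $x_0\in\mathcal{X}$, and generate $\{x_k\}$ as follows: if $0\notin\partial f(x_k)$, pick $g_k\in\partial f(x_k)$, set $t_k:=\frac{f(x_k)-f(x_\star)}{\|g_k\|}$ and $x_{k+1}\in\operatorname{arg\,min}_{z\in\mathcal{X}\cap\mathcal{B}(x_k,t_k)}\langle g_k,z\rangle$; if $0\in\partial f(x_k)$, then $t_k=0$ and the method terminates. Then for every $K\ge1$, $$\frac1K\sum_{k=0}^{K-1}(f(x_k)-f(x_\star))^2\le\frac{G^2\|x_0-x_\star\|^2}{K},$$ and $\hat x_K:=\frac1K\sum_{k=0}^{K-1}x_k$ satisfies $f(\hat x_K)-f(x_\star)\le\frac{G\|x_0-x_\star\|}{\sqrt K}$.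
   Context: $\partial f(x)$ is the convex subdifferential of $f$ at $x$. $\|\cdot\|$ is the Euclidean norm, $\mathcal{B}(x,t):=\{y:\|y-x\|\le t\}$. With $t_k=0$ the feasible set is $\{x_k\}$, so a terminated run stays at $x_k$. *)

theory Defs
  imports "HOL-Analysis.Analysis"
begin

definition subdiff :: "('a::real_inner \<Rightarrow> real) \<Rightarrow> 'a \<Rightarrow> 'a set" where
  "subdiff f x = {g. \<forall>y. f y \<ge> f x + inner g (y - x)}"

definition argmin_on :: "('a \<Rightarrow> real) \<Rightarrow> 'a set \<Rightarrow> 'a set" where
  "argmin_on h S = {x \<in> S. \<forall>y \<in> S. h x \<le> h y}"

end

theory Submission
  imports Defs
begin

text \<open>With \<open>t = (f x\<^sub>k - f x\<^sub>\<star>) / \<parallel>g\<^sub>k\<parallel>\<close>, the subgradient inequality puts \<open>x\<^sub>\<star>\<close> in the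
  halfspace \<open>\<langle>g\<^sub>k, z - x\<^sub>k\<rangle> \<le> -t \<parallel>g\<^sub>k\<parallel>\<close>. For any point \<open>w\<close> of \<open>X\<close> in this halfspace, a minimiser
  \<open>y\<close> of \<open>\<langle>g\<^sub>k, \<cdot>\<rangle>\<close> over \<open>X \<inter> B(x\<^sub>k, t)\<close> satisfies \<open>t\<^sup>2 + \<parallel>y - w\<parallel>\<^sup>2 \<le> \<parallel>x\<^sub>k - w\<parallel>\<^sup>2\<close>: either \<open>y\<close> is the
  lowest point \<open>x\<^sub>k - t g\<^sub>k / \<parallel>g\<^sub>k\<parallel>\<close> of the ball, or the segment from \<open>y\<close> to \<open>w\<close> immediately leaves
  the ball, so \<open>y\<close> lies on the sphere and the segment makes a non-acute angle with \<open>y - x\<^sub>k\<close>.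
  As \<open>t \<ge> (f x\<^sub>k - f x\<^sub>\<star>) / G\<close>, telescoping bounds the sum of the squared gaps by
  \<open>G\<^sup>2 \<parallel>x\<^sub>0 - x\<^sub>\<star>\<parallel>\<^sup>2\<close>; Jensen's inequality and the mean--root-mean-square inequality then bound
  the gap at the average iterate.\<close>

lemma isCont_lower_bound_at_0:
  fixes \<phi> :: "real \<Rightarrow> real"
  assumes "isCont \<phi> 0" and "\<And>d. 0 < d \<Longrightarrow> d \<le> 1 \<Longrightarrow> c \<le> \<phi> d"
  shows "c \<le> \<phi> 0"
proof (rule tendsto_lowerbound)
  show "(\<phi> \<longlongrightarrow> \<phi> 0) (at_right 0)"
    using assms(1) by (simp add: isCont_def filterlim_at_split)
  show "\<forall>\<^sub>F d in at_right 0. c \<le> \<phi> d"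
    by (rule eventually_mono[OF eventually_at_right_real[OF zero_less_one]]) (use assms(2) in auto)
qed simp

lemma dist_sq_le_of_segment_outside_cball:
  fixes a y w :: "'a::real_inner"
  assumes y: "norm (y - a) \<le> t"
    and outside: "\<And>d. 0 < d \<Longrightarrow> d \<le> 1 \<Longrightarrow> t \<le> norm (y + d *\<^sub>R (w - y) - a)"
  shows "t\<^sup>2 + (norm (y - w))\<^sup>2 \<le> (norm (a - w))\<^sup>2"
proof -
  define v e where "v = y - a" and "e = w - y"
  have expand: "(norm (v + d *\<^sub>R e))\<^sup>2 = (norm v)\<^sup>2 + 2 * d * inner v e + d\<^sup>2 * (norm e)\<^sup>2" for d
    unfolding power2_norm_eq_inner
    by (simp add: inner_add_left inner_add_right inner_commute power2_eq_square algebra_simps)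
  have t0: "0 \<le> t" using y norm_ge_zero order_trans by blast
  have lower: "t\<^sup>2 \<le> (norm v)\<^sup>2 + 2 * d * inner v e + d\<^sup>2 * (norm e)\<^sup>2" if "0 < d" "d \<le> 1" for d
  proof -
    have "t \<le> norm (v + d *\<^sub>R e)" using outside[OF that] by (simp add: v_def e_def algebra_simps)
    then show ?thesis using t0 expand by (metis power_mono)
  qed
  txt \<open>The quadratic \<open>\<parallel>v + d e\<parallel>\<^sup>2 \<ge> t\<^sup>2\<close> on \<open>(0,1]\<close> has value \<open>\<le> t\<^sup>2\<close> at \<open>0\<close>, so its
    value there is \<open>t\<^sup>2\<close> and its slope \<open>2 \<langle>v, e\<rangle>\<close> is nonnegative.\<close>
  have "t\<^sup>2 \<le> (norm v)\<^sup>2"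
    using isCont_lower_bound_at_0[of "\<lambda>d. (norm v)\<^sup>2 + 2 * d * inner v e + d\<^sup>2 * (norm e)\<^sup>2"] lower
    by simp
  moreover have "(norm v)\<^sup>2 \<le> t\<^sup>2" using y t0 by (simp add: v_def power_mono)
  ultimately have vt: "(norm v)\<^sup>2 = t\<^sup>2" by linarith
  have "0 \<le> 2 * inner v e + d * (norm e)\<^sup>2" if "0 < d" "d \<le> 1" for d
  proof -
    have "0 \<le> d * (2 * inner v e + d * (norm e)\<^sup>2)"
      using lower[OF that] vt by (simp add: power2_eq_square algebra_simps)
    then show ?thesis using \<open>0 < d\<close> by (simp add: zero_le_mult_iff)
  qed
  then have "0 \<le> 2 * inner v e"
    using isCont_lower_bound_at_0[of "\<lambda>d. 2 * inner v e + d * (norm e)\<^sup>2"] by simp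
  moreover have "(norm (a - w))\<^sup>2 = (norm v)\<^sup>2 + 2 * inner v e + (norm e)\<^sup>2"
    using expand[of 1] by (simp add: v_def e_def norm_minus_commute)
  ultimately show ?thesis using vt by (simp add: e_def norm_minus_commute)
qed

lemma dist_sq_le_of_cball_inner_le:
  fixes a y w g :: "'a::real_inner"
  assumes g: "g \<noteq> 0" and y: "norm (y - a) \<le> t"
    and gy: "inner g (y - a) \<le> - t * norm g" and gw: "inner g (w - a) \<le> - t * norm g"
  shows "t\<^sup>2 + (norm (y - w))\<^sup>2 \<le> (norm (a - w))\<^sup>2"
proof -
  have t0: "0 \<le> t" using y norm_ge_zero order_trans by blast
  txt \<open>Equality in Cauchy--Schwarz: \<open>y = a - t g / \<parallel>g\<parallel>\<close>.\<close>
  have cs: "inner (a - y) g \<le> norm (a - y) * norm g" by (rule norm_cauchy_schwarz)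
  have ya: "norm (a - y) * norm g \<le> t * norm g"
    using y by (simp add: norm_minus_commute mult_right_mono)
  have "t * norm g \<le> inner (a - y) g" using gy by (simp add: inner_commute inner_diff_right)
  then have "inner (a - y) g = norm (a - y) * norm g" and "norm (a - y) * norm g = t * norm g"
    using cs ya by linarith+
  moreover from this(2) have ay: "norm (a - y) = t" using g by simp
  ultimately have collinear: "t *\<^sub>R g = norm g *\<^sub>R (a - y)"
    using norm_cauchy_schwarz_eq[of "a - y" g] by simp
  have "norm g * t\<^sup>2 \<le> t * inner (a - w) g"
    using mult_left_mono[OF gw t0]
    by (simp add: power2_eq_square inner_commute inner_diff_right algebra_simps)
  also have "\<dots> = norm g * inner (a - w) (a - y)"
    using arg_cong[OF collinear, of "inner (a - w)"] by simp
  finally have "t\<^sup>2 \<le> inner (a - w) (a - y)" using g by simp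
  moreover have "(norm (y - w))\<^sup>2 = (norm (a - w))\<^sup>2 - 2 * inner (a - w) (a - y) + (norm (a - y))\<^sup>2"
  proof -
    have "y - w = (a - w) - (a - y)" by simp
    then show ?thesis
      unfolding power2_norm_eq_inner by (simp only:) (simp add: inner_diff_left inner_diff_right inner_commute)
  qed
  ultimately show ?thesis using ay by simp
qed

lemma argmin_inner_cball_dist_sq_le:
  fixes a w g :: "'a::real_inner"
  assumes X: "convex X" and w: "w \<in> X" and g: "g \<noteq> 0"
    and y: "y \<in> argmin_on (\<lambda>z. inner g z) (X \<inter> cball a t)"
    and gw: "inner g (w - a) \<le> - t * norm g"
  shows "t\<^sup>2 + (norm (y - w))\<^sup>2 \<le> (norm (a - w))\<^sup>2"
proof -
  have yX: "y \<in> X" and ya: "norm (y - a) \<le> t"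
    and ymin: "\<And>z. z \<in> X \<Longrightarrow> norm (z - a) \<le> t \<Longrightarrow> inner g y \<le> inner g z"
    using y by (auto simp: argmin_on_def dist_norm norm_minus_commute)
  show ?thesis
  proof (cases "inner g y \<le> inner g w")
    case True
    then have "inner g (y - a) \<le> - t * norm g" using gw by (simp add: inner_diff_right)
    then show ?thesis using dist_sq_le_of_cball_inner_le[OF g ya _ gw] by simp
  next
    case False
    have "t \<le> norm (y + d *\<^sub>R (w - y) - a)" if "0 < d" "d \<le> 1" for d
    proof (rule ccontr)
      assume "\<not> ?thesis"
      moreover have "y + d *\<^sub>R (w - y) = (1 - d) *\<^sub>R y + d *\<^sub>R w" by (simp add: algebra_simps)
      then have "y + d *\<^sub>R (w - y) \<in> X" using X yX w that by (simp add: convex_def)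
      ultimately have "inner g y \<le> inner g y + d * (inner g w - inner g y)"
        using ymin by (fastforce simp: inner_add_right inner_diff_right)
      then show False using False that by (simp add: zero_le_mult_iff)
    qed
    then show ?thesis by (rule dist_sq_le_of_segment_outside_cball[OF ya])
  qed
qed

lemma polyak_ball_step:
  fixes f :: "'a::real_inner \<Rightarrow> real"
  assumes X: "convex X" and xs: "xs \<in> argmin_on f X" and a: "a \<in> X"
    and G: "\<And>v. v \<in> subdiff f a \<Longrightarrow> norm v \<le> G"
    and step: "0 \<notin> subdiff f a \<Longrightarrow>
        g \<in> subdiff f a \<and> b \<in> argmin_on (\<lambda>z. inner g z) (X \<inter> cball a ((f a - f xs) / norm g))"
    and stop: "0 \<in> subdiff f a \<Longrightarrow> b = a"
  shows "b \<in> X" and "(f a - f xs)\<^sup>2 \<le> G\<^sup>2 * ((norm (a - xs))\<^sup>2 - (norm (b - xs))\<^sup>2)"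
proof -
  have xsX: "xs \<in> X" and fa: "f xs \<le> f a" using xs a by (auto simp: argmin_on_def)
  show "b \<in> X" using a step stop by (cases "0 \<in> subdiff f a") (auto simp: argmin_on_def)
  show "(f a - f xs)\<^sup>2 \<le> G\<^sup>2 * ((norm (a - xs))\<^sup>2 - (norm (b - xs))\<^sup>2)"
  proof (cases "0 \<in> subdiff f a")
    case True
    then have "f a \<le> f xs" by (auto simp: subdiff_def)
    then show ?thesis using fa stop[OF True] by simp
  next
    case False
    define t where "t = (f a - f xs) / norm g"
    have g: "g \<in> subdiff f a" and b: "b \<in> argmin_on (\<lambda>z. inner g z) (X \<inter> cball a t)"
      using step[OF False] by (auto simp: t_def)
    have g0: "g \<noteq> 0" using g False by auto
    have gap: "f a - f xs = t * norm g" using g0 by (simp add: t_def)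
    have "f a + inner g (xs - a) \<le> f xs" using g by (auto simp: subdiff_def)
    then have "inner g (xs - a) \<le> - t * norm g" using gap by linarith
    then have "t\<^sup>2 \<le> (norm (a - xs))\<^sup>2 - (norm (b - xs))\<^sup>2"
      using argmin_inner_cball_dist_sq_le[OF X xsX g0 b] by simp
    moreover have "(norm g)\<^sup>2 \<le> G\<^sup>2" using G[OF g] by (simp add: power_mono)
    ultimately have "t\<^sup>2 * (norm g)\<^sup>2 \<le> G\<^sup>2 * ((norm (a - xs))\<^sup>2 - (norm (b - xs))\<^sup>2)"
      by (metis mult.commute mult_mono zero_le_power2)
    then show ?thesis by (simp add: gap power_mult_distrib)
  qed
qed

lemma sum_le_of_telescoping_bound:
  fixes u D :: "nat \<Rightarrow> real"
  assumes "\<And>k. u k \<le> c * (D k - D (Suc k))" and "0 \<le> c" and "\<And>k. 0 \<le> D k"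
  shows "(\<Sum>k<K. u k) \<le> c * D 0"
proof -
  have "(\<Sum>k<K. u k) \<le> (\<Sum>k<K. c * (D k - D (Suc k)))" by (intro sum_mono assms(1))
  also have "\<dots> = c * (D 0 - D K)" by (simp only: sum_lessThan_telescope' flip: sum_distrib_left)
  also have "\<dots> \<le> c * D 0" using assms(2,3) by (simp add: mult_left_mono)
  finally show ?thesis .
qed

lemma convex_on_mean:
  fixes f :: "'b::real_vector \<Rightarrow> real"
  assumes "convex_on C f" and "finite A" and "A \<noteq> {}" and "\<And>i. i \<in> A \<Longrightarrow> x i \<in> C"
  shows "f ((1 / real (card A)) *\<^sub>R (\<Sum>i\<in>A. x i)) \<le> (1 / real (card A)) * (\<Sum>i\<in>A. f (x i))"
  using convex_on_sum[OF assms(2,3,1), of "\<lambda>_. 1 / real (card A)" x] assms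
  by (simp add: scaleR_sum_right sum_distrib_left)

lemma mean_le_sqrt_mean_squares:
  fixes u :: "'a \<Rightarrow> real"
  assumes "finite A" and "A \<noteq> {}"
  shows "(1 / real (card A)) * (\<Sum>i\<in>A. u i) \<le> sqrt ((1 / real (card A)) * (\<Sum>i\<in>A. (u i)\<^sup>2))"
proof (rule real_le_rsqrt)
  have n: "real (card A) > 0" using assms by (simp add: card_gt_0_iff)
  have "(\<Sum>i\<in>A. u i)\<^sup>2 \<le> (\<Sum>i\<in>A. (u i)\<^sup>2) * real (card A)"
    by (rule sum_squared_le_sum_of_squares)
  then show "((1 / real (card A)) * (\<Sum>i\<in>A. u i))\<^sup>2 \<le> (1 / real (card A)) * (\<Sum>i\<in>A. (u i)\<^sup>2)"
    using n by (simp add: power_mult_distrib power2_eq_square field_simps)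
qed

theorem theorem6:
  fixes X :: "(real ^ 'n) set" and f :: "real ^ 'n \<Rightarrow> real"
    and G :: real and xs :: "real ^ 'n"
    and x g :: "nat \<Rightarrow> real ^ 'n"
  assumes X_ne: "X \<noteq> {}" and X_closed: "closed X" and X_convex: "convex X"
    and f_convex: "convex_on UNIV f"
    and argmin_ne: "argmin_on f X \<noteq> {}"
    and G_pos: "G > 0"
    and G_bound: "\<And>y v. y \<in> X \<Longrightarrow> v \<in> subdiff f y \<Longrightarrow> norm v \<le> G"
    and xs_opt: "xs \<in> argmin_on f X"
    and x0: "x 0 \<in> X"
    and step: "\<And>k. 0 \<notin> subdiff f (x k) \<Longrightarrow>
        g k \<in> subdiff f (x k) \<and>
        x (Suc k) \<in> argmin_on (\<lambda>z. inner (g k) z)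
           (X \<inter> cball (x k) ((f (x k) - f xs) / norm (g k)))"
    and stop: "\<And>k. 0 \<in> subdiff f (x k) \<Longrightarrow> x (Suc k) = x k"
  shows "\<forall>K::nat. K \<ge> 1 \<longrightarrow>
      (1 / real K) * (\<Sum>k<K. (f (x k) - f xs)^2) \<le> G^2 * (norm (x 0 - xs))^2 / real K
    \<and> f ((1 / real K) *\<^sub>R (\<Sum>k<K. x k)) - f xs \<le> G * norm (x 0 - xs) / sqrt (real K)"
proof (intro allI impI conjI)
  txt \<open>Closedness and nonemptiness of \<open>X\<close> and of its set of minimisers only make the
    iteration well defined; the estimates do not need them.\<close>
  have iterates: "x k \<in> X" for k
  proof (induction k)
    case (Suc k)
    show ?case by (rule polyak_ball_step(1)[OF X_convex xs_opt Suc G_bound[OF Suc] step stop])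
  qed (rule x0)
  have descent: "(f (x k) - f xs)\<^sup>2 \<le> G\<^sup>2 * ((norm (x k - xs))\<^sup>2 - (norm (x (Suc k) - xs))\<^sup>2)" for k
    by (rule polyak_ball_step(2)[OF X_convex xs_opt iterates G_bound[OF iterates] step stop])
  have squares: "(\<Sum>k<K. (f (x k) - f xs)\<^sup>2) \<le> G\<^sup>2 * (norm (x 0 - xs))\<^sup>2" for K
    by (rule sum_le_of_telescoping_bound[where D = "\<lambda>k. (norm (x k - xs))\<^sup>2", OF descent]) simp_all
  fix K :: nat
  assume "K \<ge> 1"
  then have K: "{..<K} \<noteq> {}" "real K > 0" by (auto simp: lessThan_empty_iff)
  show mean_squares: "(1 / real K) * (\<Sum>k<K. (f (x k) - f xs)^2) \<le> G^2 * (norm (x 0 - xs))^2 / real K"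
    using squares[of K] K by (simp add: divide_right_mono)
  have "f ((1 / real K) *\<^sub>R (\<Sum>k<K. x k)) - f xs \<le> (1 / real K) * (\<Sum>k<K. f (x k) - f xs)"
    using convex_on_mean[OF f_convex _ K(1), of x] K by (simp add: sum_subtractf field_simps)
  also have "\<dots> \<le> sqrt ((1 / real K) * (\<Sum>k<K. (f (x k) - f xs)\<^sup>2))"
    using mean_le_sqrt_mean_squares[of "{..<K}"] K by simp
  also have "\<dots> \<le> sqrt (G\<^sup>2 * (norm (x 0 - xs))\<^sup>2 / real K)"
    using mean_squares by simp
  also have "\<dots> = G * norm (x 0 - xs) / sqrt (real K)"
    using G_pos by (simp add: real_sqrt_divide real_sqrt_mult)
  finally show "f ((1 / real K) *\<^sub>R (\<Sum>k<K. x k)) - f xs \<le> G * norm (x 0 - xs) / sqrt (real K)" .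
qed

end
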